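(* Let $A\in\mathbb{C}^{n\times n}$ be Hermitian and $\beta>0$, and consider $f(\mathbf{z})=\frac12\mathbf{z}^*A\mathbf{z}+\frac{\beta}{2}\sum_{k=1}^n|z_k|^4$ on $\mathbb{CS}^{n-1}=\{\mathbf{z}\in\mathbb{C}^n:\|\mathbf{z}\|_2=1\}$. Let $\mathbf{z}\in\mathbb{CS}^{n-1}$ be a stationary point of $\min_{\mathbf{z}\in\mathbb{CS}^{n-1}}f(\mathbf{z})$, i.e. $[A+2\beta\,\mathrm{diag}(|\mathbf{z}|^2)]\mathbf{z}=2\lambda\mathbf{z}$ with $\lambda=\frac12\mathbf{z}^*A\mathbf{z}+\beta\|\mathbf{z}\|_4^4$, and suppose that $H:=A+2\beta\,\mathrm{diag}(|\mathbf{z}|^2)-2\lambda I$ is positive semidefinite. Then $\mathbf{z}$ is a global minimizer of $f$ on $\mathbb{CS}^{n-1}$, and every global minimizer $\mathbf{y}$ of $f$ on $\mathbb{CS}^{n-1}$ belongs to $\llbracket\mathbf{z}\rrbracket=\{\mathbf{y}\in\mathbb{C}^n:|y_k|=|z_k|\ \forall k\in[n]\}$.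
   Context: $|\mathbf{z}|^2$ denotes the componentwise squared modulus vector $(|z_1|^2,\dots,|z_n|^2)$, $\mathrm{diag}(\mathbf{x})$ the diagonal matrix with diagonal $\mathbf{x}$, $[n]=\{1,\dots,n\}$, $\|\mathbf{z}\|_4^4=\sum_k|z_k|^4$. *)

theory Defs
  imports "HOL-Analysis.Analysis"
begin

definition hermitian :: "complex ^'n ^'n \<Rightarrow> bool" where
  "hermitian A \<longleftrightarrow> (\<forall>i j. A $ i $ j = cnj (A $ j $ i))"

definition qform :: "complex ^'n ^'n \<Rightarrow> complex ^'n \<Rightarrow> complex" where
  "qform A z = (\<Sum>i\<in>UNIV. \<Sum>j\<in>UNIV. cnj (z $ i) * A $ i $ j * z $ j)"

definition psd :: "complex ^'n ^'n \<Rightarrow> bool" where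
  "psd H \<longleftrightarrow> (\<forall>x. qform H x \<in> \<real> \<and> Re (qform H x) \<ge> 0)"

definition diagm :: "complex ^'n \<Rightarrow> complex ^'n ^'n" where
  "diagm d = (\<chi> i j. if i = j then d $ i else 0)"

definition sqmod :: "complex ^'n \<Rightarrow> complex ^'n" where
  "sqmod z = (\<chi> k. complex_of_real ((cmod (z $ k))^2))"

definition norm4_4 :: "complex ^'n \<Rightarrow> real" where
  "norm4_4 z = (\<Sum>k\<in>UNIV. (cmod (z $ k))^4)"

text \<open>f(z) = 1/2 z^* A z + beta/2 sum |z_k|^4 (real part taken; real when A Hermitian).\<close>
definition fobj :: "complex ^'n ^'n \<Rightarrow> real \<Rightarrow> complex ^'n \<Rightarrow> real" where
  "fobj A \<beta> z = Re (qform A z) / 2 + \<beta> / 2 * norm4_4 z"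

end

theory Submission
  imports Defs
begin

text \<open>Write \<open>a\<^sub>k = |z\<^sub>k|\<^sup>2\<close> and \<open>b\<^sub>k = |w\<^sub>k|\<^sup>2\<close> with \<open>w\<close> a unit vector. Since the diagonal
  and scalar parts of \<open>H\<close> act on \<open>w\<close> through the \<open>b\<^sub>k\<close> only, \<open>w\<^sup>* H w \<ge> 0\<close> reads
  \<open>w\<^sup>*Aw + 2\<beta> \<Sum> a\<^sub>k b\<^sub>k \<ge> 2 Re \<lambda> = z\<^sup>*Az + 2\<beta> \<Sum> a\<^sub>k\<^sup>2\<close>, and completing the square gives
  \<open>f(w) - f(z) \<ge> \<beta>/2 \<Sum> (a\<^sub>k - b\<^sub>k)\<^sup>2\<close>. Hence \<open>z\<close> is a global minimizer, and a minimizer \<open>w\<close>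
  forces \<open>b = a\<close>.\<close>

lemma qform_add: "qform (M + N) w = qform M w + qform N w"
  unfolding qform_def by (simp add: distrib_left distrib_right sum.distrib)

lemma qform_diff: "qform (M - N) w = qform M w - qform N w"
  unfolding qform_def by (simp add: right_diff_distrib left_diff_distrib sum_subtractf)

lemma qform_scaleR: "qform (c *\<^sub>R M) w = of_real c * qform M w"
  unfolding qform_def vector_scaleR_component
  by (simp add: sum_distrib_left scaleR_conv_of_real algebra_simps)

lemma qform_diagm: "qform (diagm d) w = (\<Sum>i\<in>UNIV. d $ i * of_real ((cmod (w $ i))\<^sup>2))"
proof -
  have "qform (diagm d) w = (\<Sum>i\<in>UNIV. cnj (w $ i) * d $ i * w $ i)"
    unfolding qform_def diagm_def
    by (simp add: if_distrib if_distribR sum.delta cong: if_cong)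
  also have "\<dots> = (\<Sum>i\<in>UNIV. d $ i * of_real ((cmod (w $ i))\<^sup>2))"
    by (intro sum.cong refl) (metis complex_norm_square mult.commute mult.left_commute)
  finally show ?thesis .
qed

lemma qform_mat:
  fixes w :: "complex ^'n"
  shows "qform (mat c) w = c * (\<Sum>i\<in>UNIV. of_real ((cmod (w $ i))\<^sup>2))"
proof -
  have "(mat c :: complex ^'n ^'n) = diagm (\<chi> i. c)"
    unfolding mat_def diagm_def by (simp add: vec_eq_iff)
  then show ?thesis
    by (simp add: qform_diagm sum_distrib_left)
qed

lemma power2_norm_vec: "(norm x)\<^sup>2 = (\<Sum>i\<in>UNIV. (norm (x $ i))\<^sup>2)"
  unfolding norm_vec_def L2_set_def by (simp add: sum_nonneg)

lemma Re_qform_diagm_sqmod_shift: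
  "Re (qform (A + (2 * \<beta>) *\<^sub>R diagm (sqmod z) - mat c) w)
     = Re (qform A w) + 2 * \<beta> * (\<Sum>k\<in>UNIV. (cmod (z $ k))\<^sup>2 * (cmod (w $ k))\<^sup>2)
       - Re c * (norm w)\<^sup>2"
  by (simp add: qform_add qform_diff qform_scaleR qform_diagm qform_mat sqmod_def
      power2_norm_vec Re_sum sum_distrib_left mult.assoc)

lemma fobj_eq_sqmod: "fobj A \<beta> w = Re (qform A w) / 2 + \<beta> / 2 * (\<Sum>k\<in>UNIV. ((cmod (w $ k))\<^sup>2)\<^sup>2)"
  by (simp add: fobj_def norm4_4_def power_mult[symmetric])

lemma fobj_ge_plus_sqmod_gap:
  assumes "norm w = 1"
    and lam: "lam = qform A z / 2 + complex_of_real (\<beta> * norm4_4 z)"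
    and psd: "psd (A + (2 * \<beta>) *\<^sub>R diagm (sqmod z) - mat (2 * lam))"
  shows "fobj A \<beta> z + \<beta> / 2 * (\<Sum>k\<in>UNIV. ((cmod (z $ k))\<^sup>2 - (cmod (w $ k))\<^sup>2)\<^sup>2)
           \<le> fobj A \<beta> w"
proof -
  define a where "a k = (cmod (z $ k))\<^sup>2" for k
  define b where "b k = (cmod (w $ k))\<^sup>2" for k
  have "0 \<le> Re (qform (A + (2 * \<beta>) *\<^sub>R diagm (sqmod z) - mat (2 * lam)) w)"
    using psd unfolding psd_def by blast
  then have psd_at_w: "2 * Re lam \<le> Re (qform A w) + 2 * \<beta> * (\<Sum>k\<in>UNIV. a k * b k)"
    using \<open>norm w = 1\<close> by (simp add: Re_qform_diagm_sqmod_shift a_def b_def)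
  have "Re lam = Re (qform A z) / 2 + \<beta> * (\<Sum>k\<in>UNIV. (a k)\<^sup>2)"
    using lam by (simp add: norm4_4_def a_def power_mult[symmetric])
  moreover have "\<beta> / 2 * (\<Sum>k\<in>UNIV. (a k - b k)\<^sup>2)
      = \<beta> / 2 * (\<Sum>k\<in>UNIV. (a k)\<^sup>2) - \<beta> * (\<Sum>k\<in>UNIV. a k * b k)
        + \<beta> / 2 * (\<Sum>k\<in>UNIV. (b k)\<^sup>2)"
    by (simp add: power2_diff sum.distrib sum_subtractf sum_distrib_left algebra_simps)
  ultimately show ?thesis
    using psd_at_w unfolding fobj_eq_sqmod a_def[symmetric] b_def[symmetric] by linarith
qed

lemma cmod_eq_if_sum_sqmod_diff_nonpos:
  assumes "(\<Sum>k\<in>UNIV. ((cmod (z $ k))\<^sup>2 - (cmod (w $ k))\<^sup>2)\<^sup>2) \<le> 0"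
  shows "cmod (w $ k) = cmod (z $ k)"
proof -
  have "(\<Sum>k\<in>UNIV. ((cmod (z $ k))\<^sup>2 - (cmod (w $ k))\<^sup>2)\<^sup>2) = 0"
    using assms by (meson antisym sum_nonneg zero_le_power2)
  then have "(cmod (z $ k))\<^sup>2 = (cmod (w $ k))\<^sup>2"
    by (simp add: sum_nonneg_eq_0_iff)
  then show ?thesis
    by (simp add: power2_eq_iff_nonneg)
qed

theorem theorem1:
  fixes A :: "complex ^'n ^'n" and \<beta> :: real and z :: "complex ^'n" and lam :: complex
  assumes herm: "hermitian A"
    and beta: "\<beta> > 0"
    and unit: "norm z = 1"
    and lam: "lam = qform A z / 2 + complex_of_real (\<beta> * norm4_4 z)"
    and stat: "(A + (2 * \<beta>) *\<^sub>R diagm (sqmod z)) *v z = (2 * lam) *s z"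
    and psd: "psd (A + (2 * \<beta>) *\<^sub>R diagm (sqmod z) - mat (2 * lam))"
  shows "(\<forall>w. norm w = 1 \<longrightarrow> fobj A \<beta> z \<le> fobj A \<beta> w)
       \<and> (\<forall>y. norm y = 1 \<and> (\<forall>w. norm w = 1 \<longrightarrow> fobj A \<beta> y \<le> fobj A \<beta> w)
              \<longrightarrow> (\<forall>k. cmod (y $ k) = cmod (z $ k)))"
proof (intro conjI allI impI)
  fix w :: "complex ^'n"
  assume "norm w = 1"
  have "0 \<le> \<beta> / 2 * (\<Sum>k\<in>UNIV. ((cmod (z $ k))\<^sup>2 - (cmod (w $ k))\<^sup>2)\<^sup>2)"
    using beta by (simp add: sum_nonneg)
  with fobj_ge_plus_sqmod_gap[OF \<open>norm w = 1\<close> lam psd]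
  show "fobj A \<beta> z \<le> fobj A \<beta> w" by linarith
next
  fix y :: "complex ^'n" and k
  assume y: "norm y = 1 \<and> (\<forall>w. norm w = 1 \<longrightarrow> fobj A \<beta> y \<le> fobj A \<beta> w)"
  with unit have "fobj A \<beta> y \<le> fobj A \<beta> z" by blast
  with fobj_ge_plus_sqmod_gap[OF _ lam psd, of y] y
  have "\<beta> / 2 * (\<Sum>k\<in>UNIV. ((cmod (z $ k))\<^sup>2 - (cmod (y $ k))\<^sup>2)\<^sup>2) \<le> 0" by linarith
  with beta have "(\<Sum>k\<in>UNIV. ((cmod (z $ k))\<^sup>2 - (cmod (y $ k))\<^sup>2)\<^sup>2) \<le> 0"
    by (simp add: mult_le_0_iff)
  then show "cmod (y $ k) = cmod (z $ k)"
    by (rule cmod_eq_if_sum_sqmod_diff_nonpos)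
qed

end
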